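(* Let $G_1, G_2$ be two graphs on the same vertex set $V$. Let $A \subseteq S(G_2)$ and $B \subseteq V$ be such that $N_{G_1}(B) \cup N_{G_2}(B) \subseteq A$. Suppose $E(G_1) \triangle E(G_2) \subseteq \binom{A \cup B}{2}$. Then $S(G_1) \setminus B \subseteq S(G_2) \setminus B$.
   Context: For a graph $G$ and $X\subseteq V(G)$, $N_G(X)=\{x\in V(G)\setminus X: xy\in E(G)\text{ for some }y\in X\}$ and $N_G(x)=N_G(\{x\})$. The strong $4$-core $S(G)$ is the maximal set $X\subseteq V(G)$ such that $|N_G(x)\cap X|\ge 4$ for every $x\in X\cup N_G(X)$ (well-defined since the union of two such sets is again such a set). $\triangle$ denotes symmetric difference. *)

theory Defs
  imports Main
begin

definition graph :: "'a set \<Rightarrow> 'a set set \<Rightarrow> bool" where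
  "graph V E \<longleftrightarrow> finite V \<and> (\<forall>e\<in>E. e \<subseteq> V \<and> card e = 2)"

definition nbhd :: "'a set \<Rightarrow> 'a set set \<Rightarrow> 'a set \<Rightarrow> 'a set" where
  "nbhd V E X = {x \<in> V - X. \<exists>y\<in>X. {x, y} \<in> E}"

definition two_subsets :: "'a set \<Rightarrow> 'a set set" where
  "two_subsets A = {e. e \<subseteq> A \<and> card e = 2}"

definition strong4 :: "'a set \<Rightarrow> 'a set set \<Rightarrow> 'a set \<Rightarrow> bool" where
  "strong4 V E X \<longleftrightarrow> X \<subseteq> V \<and>
     (\<forall>x \<in> X \<union> nbhd V E X. card (nbhd V E {x} \<inter> X) \<ge> 4)"

text \<open>The strong 4-core: the maximal set with the property, i.e. the union
of all such sets (the union of such sets is again such a set).\<close>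
definition strong_core :: "'a set \<Rightarrow> 'a set set \<Rightarrow> 'a set" where
  "strong_core V E = \<Union> {X. strong4 V E X}"

end

theory Submission
  imports Defs
begin

text \<open>Let \<open>S\<^sub>i\<close> be the strong 4-core of \<open>G\<^sub>i\<close> and \<open>N\<^sub>i\<close> its neighbourhood operator.
  By maximality it suffices to show that \<open>X = (S\<^sub>1 - B) \<union> S\<^sub>2\<close> has the strong 4-core
  property in \<open>G\<^sub>2\<close>. Vertices of \<open>S\<^sub>2 \<union> N\<^sub>2(S\<^sub>2)\<close> already see four vertices of \<open>S\<^sub>2\<close>.
  Any other vertex \<open>x\<close> of \<open>X \<union> N\<^sub>2(X)\<close> lies outside \<open>A \<subseteq> S\<^sub>2\<close>, and outside \<open>B\<close>, for
  otherwise its neighbour in \<open>S\<^sub>1 - B\<close> would lie in \<open>N\<^sub>2(B) \<subseteq> S\<^sub>2\<close>. So no edge of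
  \<open>E(G\<^sub>1) \<triangle> E(G\<^sub>2)\<close> meets \<open>x\<close>, whence \<open>x \<in> S\<^sub>1 \<union> N\<^sub>1(S\<^sub>1)\<close> and its four \<open>G\<^sub>1\<close>-neighbours
  in \<open>S\<^sub>1\<close> are \<open>G\<^sub>2\<close>-neighbours; they avoid \<open>B\<close> because \<open>N\<^sub>1(B) \<subseteq> A\<close>, so they lie in \<open>X\<close>.\<close>

lemma mem_nbhd_iff:
  "x \<in> nbhd V E X \<longleftrightarrow> x \<in> V \<and> x \<notin> X \<and> (\<exists>y\<in>X. {x, y} \<in> E)"
  by (auto simp: nbhd_def)

lemma mem_nbhd_singleton_iff:
  "z \<in> nbhd V E {x} \<longleftrightarrow> z \<in> V \<and> z \<noteq> x \<and> {x, z} \<in> E"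
  by (auto simp: nbhd_def insert_commute)

lemma nbhd_subset: "nbhd V E X \<subseteq> V"
  by (auto simp: nbhd_def)

lemma finite_nbhd: "finite V \<Longrightarrow> finite (nbhd V E X)"
  using nbhd_subset by (rule finite_subset)

lemma mem_Un_nbhd_if_adjacent:
  "x \<in> V \<Longrightarrow> y \<in> X \<Longrightarrow> {x, y} \<in> E \<Longrightarrow> x \<in> X \<union> nbhd V E X"
  by (auto simp: mem_nbhd_iff)

lemma strong_core_subset: "strong_core V E \<subseteq> V"
  by (auto simp: strong_core_def strong4_def)

lemma strong4_subset_strong_core: "strong4 V E X \<Longrightarrow> X \<subseteq> strong_core V E"
  by (auto simp: strong_core_def)

lemma card_nbhd_inter_strong_core:
  assumes "finite V" and "x \<in> strong_core V E \<union> nbhd V E (strong_core V E)"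
  shows "4 \<le> card (nbhd V E {x} \<inter> strong_core V E)"
proof -
  obtain Y where Y: "strong4 V E Y" "x \<in> Y \<union> nbhd V E Y"
    using assms(2) by (auto simp: strong_core_def mem_nbhd_iff)
  have "4 \<le> card (nbhd V E {x} \<inter> Y)"
    using Y by (auto simp: strong4_def)
  also have "\<dots> \<le> card (nbhd V E {x} \<inter> strong_core V E)"
    using assms(1) strong4_subset_strong_core[OF Y(1)]
    by (intro card_mono) (auto simp: finite_nbhd)
  finally show ?thesis .
qed

lemma edge_mem_iff_if_not_mem:
  assumes "(E1 - E2) \<union> (E2 - E1) \<subseteq> two_subsets C" and "x \<notin> C"
  shows "{x, z} \<in> E1 \<longleftrightarrow> {x, z} \<in> E2"
  using assms by (auto simp: two_subsets_def)

lemma card_nbhd_inter_Diff_Un_strong_core: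
  fixes V A B :: "'a set" and E1 E2 :: "'a set set"
  defines "X \<equiv> (strong_core V E1 - B) \<union> strong_core V E2"
  assumes "finite V" and "A \<subseteq> strong_core V E2"
    and "nbhd V E1 B \<union> nbhd V E2 B \<subseteq> A"
    and "(E1 - E2) \<union> (E2 - E1) \<subseteq> two_subsets (A \<union> B)"
    and "x \<in> X \<union> nbhd V E2 X"
    and "x \<notin> strong_core V E2 \<union> nbhd V E2 (strong_core V E2)"
  shows "4 \<le> card (nbhd V E2 {x} \<inter> X)"
proof -
  have "x \<in> V"
    using assms(6) strong_core_subset[of V E1] strong_core_subset[of V E2]
      nbhd_subset[of V E2 X] unfolding X_def by blast
  have "x \<notin> A"
    using assms(3,7) by blast
  obtain y where y: "y \<in> strong_core V E1" "y \<notin> B" and "x = y \<or> {x, y} \<in> E2"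
    using assms(6,7) \<open>x \<in> V\<close> by (auto simp: X_def mem_nbhd_iff)
  have "x \<notin> B"
  proof
    assume "x \<in> B"
    then have "{x, y} \<in> E2"
      using y(2) \<open>x = y \<or> {x, y} \<in> E2\<close> by blast
    moreover have "y \<in> V"
      using y(1) strong_core_subset[of V E1] by blast
    ultimately have "y \<in> nbhd V E2 B"
      using \<open>x \<in> B\<close> y(2) by (simp add: mem_nbhd_iff insert_commute) blast
    then have "y \<in> strong_core V E2"
      using assms(3,4) by blast
    then show False
      using mem_Un_nbhd_if_adjacent[OF \<open>x \<in> V\<close> _ \<open>{x, y} \<in> E2\<close>] assms(7) by blast
  qed
  have edge_iff: "{x, z} \<in> E1 \<longleftrightarrow> {x, z} \<in> E2" for z
    using edge_mem_iff_if_not_mem[OF assms(5)] \<open>x \<notin> A\<close> \<open>x \<notin> B\<close> by blast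
  then have nbhd_eq: "nbhd V E1 {x} = nbhd V E2 {x}"
    by (auto simp: mem_nbhd_singleton_iff)
  from \<open>x = y \<or> {x, y} \<in> E2\<close>
  have "x \<in> strong_core V E1 \<union> nbhd V E1 (strong_core V E1)"
  proof
    assume "{x, y} \<in> E2"
    then show ?thesis
      using mem_Un_nbhd_if_adjacent[OF \<open>x \<in> V\<close> y(1)] edge_iff by blast
  qed (use y(1) in blast)
  then have "4 \<le> card (nbhd V E1 {x} \<inter> strong_core V E1)"
    by (rule card_nbhd_inter_strong_core[OF assms(2)])
  also have "\<dots> \<le> card (nbhd V E2 {x} \<inter> X)"
  proof (intro card_mono)
    show "finite (nbhd V E2 {x} \<inter> X)"
      using assms(2) by (simp add: finite_nbhd)
    have "z \<notin> B" if "z \<in> nbhd V E1 {x}" for z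
    proof
      assume "z \<in> B"
      moreover have "{x, z} \<in> E1"
        using that by (simp add: mem_nbhd_singleton_iff)
      ultimately have "x \<in> nbhd V E1 B"
        using \<open>x \<notin> B\<close> \<open>x \<in> V\<close> unfolding mem_nbhd_iff by blast
      then show False
        using assms(4) \<open>x \<notin> A\<close> by blast
    qed
    then show "nbhd V E1 {x} \<inter> strong_core V E1 \<subseteq> nbhd V E2 {x} \<inter> X"
      using nbhd_eq unfolding X_def by blast
  qed
  finally show ?thesis .
qed

lemma strong4_Diff_Un_strong_core:
  assumes "finite V" and "A \<subseteq> strong_core V E2"
    and "nbhd V E1 B \<union> nbhd V E2 B \<subseteq> A"
    and "(E1 - E2) \<union> (E2 - E1) \<subseteq> two_subsets (A \<union> B)"
  shows "strong4 V E2 ((strong_core V E1 - B) \<union> strong_core V E2)"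
    (is "strong4 V E2 ?X")
  unfolding strong4_def
proof (intro conjI ballI)
  show "?X \<subseteq> V"
    using strong_core_subset[of V E1] strong_core_subset[of V E2] by blast
  fix x assume x: "x \<in> ?X \<union> nbhd V E2 ?X"
  show "4 \<le> card (nbhd V E2 {x} \<inter> ?X)"
  proof (cases "x \<in> strong_core V E2 \<union> nbhd V E2 (strong_core V E2)")
    case True
    then have "4 \<le> card (nbhd V E2 {x} \<inter> strong_core V E2)"
      by (rule card_nbhd_inter_strong_core[OF assms(1)])
    also have "\<dots> \<le> card (nbhd V E2 {x} \<inter> ?X)"
      using assms(1) by (intro card_mono) (auto simp: finite_nbhd)
    finally show ?thesis .
  next
    case False
    then show ?thesis
      by (rule card_nbhd_inter_Diff_Un_strong_core[OF assms x])
  qed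
qed

theorem lemma4p4:
  fixes V :: "'a set" and E1 E2 :: "'a set set" and A B :: "'a set"
  assumes "graph V E1" and "graph V E2"
    and "A \<subseteq> strong_core V E2" and "B \<subseteq> V"
    and "nbhd V E1 B \<union> nbhd V E2 B \<subseteq> A"
    and "(E1 - E2) \<union> (E2 - E1) \<subseteq> two_subsets (A \<union> B)"
  shows "strong_core V E1 - B \<subseteq> strong_core V E2 - B"
proof -
  have "finite V" \<comment> \<open>all that is used of \<open>graph\<close>\<close>
    using assms(1) by (simp add: graph_def)
  then have "strong4 V E2 ((strong_core V E1 - B) \<union> strong_core V E2)"
    using assms(3,5,6) by (rule strong4_Diff_Un_strong_core)
  then have "(strong_core V E1 - B) \<union> strong_core V E2 \<subseteq> strong_core V E2"
    by (rule strong4_subset_strong_core)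
  then show ?thesis
    by blast
qed

end
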